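(* Let $(F,t)\in U$ with $t\neq0$, $Y=Y_{F,t}$, and $i\in\{1,2\}$. Then $D_i\setminus D_i^\circ=\Gamma_1\cup\Gamma_2$.
   Context: $U=U_0\times\mathbb{A}^1$, where $U_0$ is the space of cubic forms $F(x_0,\dots,x_3)$ such that the curve cut out by $F$ on the quadric $x_0x_3=x_1x_2$ in $\mathbb{P}^3$ is smooth, avoids $[0,0,0,1]$, and is tangent with multiplicity $2$ to the lines $x_0=x_1=0$ and $x_0=x_2=0$. $Y_{F,t}\subset\mathbb{P}^5$ is $x_4^3-F(x_0,\dots,x_3)+x_5(x_0x_3-x_1x_2)+t\,x_0x_5^2=0$, $F(Y)$ its Fano variety of lines, $p_0=[0,\dots,0,1]$. $C_i=(x_0=x_i=x_5=0)\cap(x_4^3=F)$, $\hat C_i\subset Y$ the cone over $C_i$ with vertex $p_0$, $\Gamma_i\subset F(Y)$ the set of lines $\overline{p_0p}$, $p\in C_i$. $D_i\subset F(Y)$ is the locus of lines meeting $\hat C_i$, and $D_i^\circ\subset D_i$ the subset of lines meeting $\hat C_i\setminus\{p_0\}$ in exactly one point. *)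

theory Defs
  imports Complex_Main "HOL-Computational_Algebra.Polynomial"
begin

text \<open>Vectors of C^4 and C^6 are functions nat => complex whose
coordinates with index > 3 (resp. > 5) vanish.  A projective point is a nonzero
vector up to scaling; a subvariety of projective space is represented by its affine
cone of vectors.\<close>

type_synonym vec = "nat \<Rightarrow> complex"
type_synonym cubic = "nat \<Rightarrow> nat \<Rightarrow> nat \<Rightarrow> complex"

definition vecn :: "nat \<Rightarrow> vec \<Rightarrow> bool" where
  "vecn n x \<longleftrightarrow> (\<forall>i>n. x i = 0)"

definition proportional :: "vec \<Rightarrow> vec \<Rightarrow> bool" where
  "proportional u v \<longleftrightarrow> (\<exists>a b. (a, b) \<noteq> (0, 0) \<and> (\<forall>m. a * u m + b * v m = 0))"

definition evalF :: "cubic \<Rightarrow> vec \<Rightarrow> complex" where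
  "evalF c x = (\<Sum>i<4. \<Sum>j<4. \<Sum>k<4. c i j k * x i * x j * x k)"

definition gradF :: "cubic \<Rightarrow> vec \<Rightarrow> vec" where
  "gradF c x = (\<lambda>m. if m < 4 then (\<Sum>i<4. \<Sum>j<4. \<Sum>k<4. c i j k *
      ((if i = m then x j * x k else 0) + (if j = m then x i * x k else 0)
       + (if k = m then x i * x j else 0))) else 0)"

definition quadQ :: "vec \<Rightarrow> complex" where
  "quadQ x = x 0 * x 3 - x 1 * x 2"

definition gradQ :: "vec \<Rightarrow> vec" where
  "gradQ x = (\<lambda>m. if m = 0 then x 3 else if m = 1 then - x 2 else if m = 2 then - x 1
                   else if m = 3 then x 0 else 0)"

definition smooth_curve :: "cubic \<Rightarrow> bool" where
  "smooth_curve c \<longleftrightarrow> (\<forall>x. vecn 3 x \<and> x \<noteq> (\<lambda>_. 0) \<and> quadQ x = 0 \<and> evalF c x = 0 \<longrightarrow>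
      \<not> proportional (gradF c x) (gradQ x))"

definition restr_poly :: "cubic \<Rightarrow> vec \<Rightarrow> vec \<Rightarrow> complex poly" where
  "restr_poly c p q = (\<Sum>i<4. \<Sum>j<4. \<Sum>k<4.
      smult (c i j k) ([:p i, q i:] * [:p j, q j:] * [:p k, q k:]))"

text \<open>Tangency with multiplicity 2 of the curve to the projective line through p, q,
where q is a point not on the curve (so all intersection points lie in the affine
chart p + u q): the restricted cubic has a root of multiplicity exactly 2.\<close>
definition tangent_mult2 :: "cubic \<Rightarrow> vec \<Rightarrow> vec \<Rightarrow> bool" where
  "tangent_mult2 c p q \<longleftrightarrow> restr_poly c p q \<noteq> 0 \<and> (\<exists>a. order a (restr_poly c p q) = 2)"

definition e :: "nat \<Rightarrow> vec" where
  "e n = (\<lambda>m. if m = n then 1 else 0)"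

definition U0 :: "cubic set" where
  "U0 = {c. smooth_curve c \<and> evalF c (e 3) \<noteq> 0
          \<and> tangent_mult2 c (e 2) (e 3)   \<comment> \<open>line x0 = x1 = 0\<close>
          \<and> tangent_mult2 c (e 1) (e 3)}" \<comment> \<open>line x0 = x2 = 0\<close>

definition Yeq :: "cubic \<Rightarrow> complex \<Rightarrow> vec \<Rightarrow> complex" where
  "Yeq c t x = x 4 ^ 3 - evalF c x + x 5 * (x 0 * x 3 - x 1 * x 2) + t * x 0 * x 5 ^ 2"

definition span2 :: "vec \<Rightarrow> vec \<Rightarrow> vec set" where
  "span2 u v = {x. \<exists>a b. x = (\<lambda>m. a * u m + b * v m)}"

text \<open>Lines of P^5, represented as 2-dimensional subspaces of C^6.\<close>
definition lines5 :: "vec set set" where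
  "lines5 = {L. \<exists>u v. vecn 5 u \<and> vecn 5 v \<and> \<not> proportional u v \<and> L = span2 u v}"

definition Fano :: "cubic \<Rightarrow> complex \<Rightarrow> vec set set" where
  "Fano c t = {L \<in> lines5. \<forall>x\<in>L. Yeq c t x = 0}"

definition p0 :: vec where "p0 = e 5"

definition Ccone :: "cubic \<Rightarrow> nat \<Rightarrow> vec set" where
  "Ccone c i = {x. vecn 5 x \<and> x 0 = 0 \<and> x i = 0 \<and> x 5 = 0 \<and> x 4 ^ 3 = evalF c x}"

definition Chat :: "cubic \<Rightarrow> nat \<Rightarrow> vec set" where
  "Chat c i = \<Union>{span2 p p0 | p. p \<in> Ccone c i}"

definition Gamma :: "cubic \<Rightarrow> nat \<Rightarrow> vec set set" where
  "Gamma c i = {span2 p0 p | p. p \<in> Ccone c i \<and> p \<noteq> (\<lambda>_. 0)}"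

definition Dloc :: "cubic \<Rightarrow> complex \<Rightarrow> nat \<Rightarrow> vec set set" where
  "Dloc c t i = {L \<in> Fano c t. \<exists>x\<in>L \<inter> Chat c i. x \<noteq> (\<lambda>_. 0)}"

definition Dcirc :: "cubic \<Rightarrow> complex \<Rightarrow> nat \<Rightarrow> vec set set" where
  "Dcirc c t i = {L \<in> Dloc c t i.
     (\<exists>x\<in>L \<inter> Chat c i. x \<noteq> (\<lambda>_. 0) \<and> \<not> proportional x p0) \<and>
     (\<forall>x\<in>L \<inter> Chat c i. \<forall>y\<in>L \<inter> Chat c i.
        x \<noteq> (\<lambda>_. 0) \<and> \<not> proportional x p0 \<and> y \<noteq> (\<lambda>_. 0) \<and> \<not> proportional y p0 \<longrightarrow> proportional x y)}"

end

theory Submission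
  imports Defs
begin

text \<open>A line of Y through p0 is spanned by p0 and a point q with q5 = 0, and along it the
  equation of Y is a quadratic polynomial in the p0-coordinate whose coefficients are
  x4^3 - F, the quadric, and t x0.  Since t is nonzero, q lies on the quadric with q0 = 0,
  hence q1 q2 = 0 and q lies on C1 or C2.  A line of Gamma_j meets the cone over C_i either
  only in p0 or (when it lies in that cone) in all of its points, so it is not in Dcirc.
  Finally, a line of Y that avoids p0 but meets the cone over C_i in two distinct points
  lies in the plane x0 = xi = 0, where Y reads x4^3 = F; projecting it from p0 onto the line
  x0 = xi = 0 of the quadric shows that F restricted to that line is the cube of a linear
  form, contradicting tangency of multiplicity exactly 2.\<close>

lemma span2_lincomb:
  assumes "x \<in> span2 u v" and "y \<in> span2 u v"
  shows "(\<lambda>m. a * x m + b * y m) \<in> span2 u v"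
proof -
  obtain a1 b1 a2 b2 where "x = (\<lambda>m. a1 * u m + b1 * v m)" and "y = (\<lambda>m. a2 * u m + b2 * v m)"
    using assms unfolding span2_def by blast
  then have "(\<lambda>m. a * x m + b * y m) = (\<lambda>m. (a * a1 + b * a2) * u m + (a * b1 + b * b2) * v m)"
    by (auto simp: algebra_simps)
  then show ?thesis unfolding span2_def by blast
qed

lemma span2_generators: "u \<in> span2 u v" "v \<in> span2 u v"
proof -
  have "u = (\<lambda>m. 1 * u m + 0 * v m)" "v = (\<lambda>m. 0 * u m + 1 * v m)" by simp_all
  then show "u \<in> span2 u v" "v \<in> span2 u v" unfolding span2_def by blast+
qed

lemma span2_commute: "span2 u v = span2 v u"
  unfolding span2_def by (fastforce simp: add.commute)

lemma vecn_span2: "x \<in> span2 u v \<Longrightarrow> vecn n u \<Longrightarrow> vecn n v \<Longrightarrow> vecn n x"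
  unfolding span2_def vecn_def by auto

lemma det2_zero_obtains_kernel:
  fixes u1 u2 v1 v2 :: "'a::field"
  assumes "u1 * v2 - u2 * v1 = 0"
  obtains a b where "(a, b) \<noteq> (0, 0)" "a * u1 + b * v1 = 0" "a * u2 + b * v2 = 0"
proof (cases "(v2, - u2) = (0, 0)")
  case False
  then show ?thesis using assms by (intro that[of v2 "- u2"]) (auto simp: algebra_simps)
next
  case zero2: True
  show ?thesis
  proof (cases "(v1, - u1) = (0, 0)")
    case False
    then show ?thesis using zero2 by (intro that[of v1 "- u1"]) (auto simp: algebra_simps)
  next
    case True
    then show ?thesis using zero2 by (intro that[of 1 0]) auto
  qed
qed

lemma span2_eq_if_not_proportional:
  assumes z: "z \<in> span2 u v" and w: "w \<in> span2 u v" and np: "\<not> proportional z w"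
  shows "span2 z w = span2 u v"
proof
  show "span2 z w \<subseteq> span2 u v"
    using span2_lincomb[OF z w] unfolding span2_def[of z w] by auto
next
  obtain a b c d where zz: "z = (\<lambda>m. a * u m + b * v m)" and ww: "w = (\<lambda>m. c * u m + d * v m)"
    using z w unfolding span2_def by blast
  define D where "D = a * d - b * c"
  have "D \<noteq> 0"
  proof
    assume "D = 0"
    then obtain \<alpha> \<beta> where \<alpha>\<beta>: "(\<alpha>, \<beta>) \<noteq> (0, 0)" "\<alpha> * a + \<beta> * c = 0" "\<alpha> * b + \<beta> * d = 0"
      unfolding D_def by (rule det2_zero_obtains_kernel)
    have "\<alpha> * z m + \<beta> * w m = (\<alpha> * a + \<beta> * c) * u m + (\<alpha> * b + \<beta> * d) * v m" for m
      by (simp add: zz ww algebra_simps)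
    then have "\<forall>m. \<alpha> * z m + \<beta> * w m = 0" using \<alpha>\<beta> by simp
    then show False using np \<alpha>\<beta>(1) unfolding proportional_def by blast
  qed
  have "u = (\<lambda>m. (d / D) * z m + (- b / D) * w m)"
  proof
    fix m
    have "D * u m = d * z m - b * w m" by (simp add: zz ww D_def algebra_simps)
    then show "u m = (d / D) * z m + (- b / D) * w m" using \<open>D \<noteq> 0\<close> by (simp add: field_simps)
  qed
  moreover have "v = (\<lambda>m. (- c / D) * z m + (a / D) * w m)"
  proof
    fix m
    have "D * v m = a * w m - c * z m" by (simp add: zz ww D_def algebra_simps)
    then show "v m = (- c / D) * z m + (a / D) * w m" using \<open>D \<noteq> 0\<close> by (simp add: field_simps)
  qed
  ultimately have "u \<in> span2 z w" "v \<in> span2 z w"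
    by (metis span2_lincomb span2_generators)+
  then show "span2 u v \<subseteq> span2 z w"
    unfolding span2_def[of u v] using span2_lincomb by blast
qed

lemma proportional_commute: "proportional u v \<Longrightarrow> proportional v u"
  unfolding proportional_def by (metis add.commute prod.inject)

lemma proportional_p0_iff: "proportional x p0 \<longleftrightarrow> (\<forall>m. m \<noteq> 5 \<longrightarrow> x m = 0)"
proof
  assume "proportional x p0"
  then obtain a b where ab: "(a, b) \<noteq> (0, 0)" "\<forall>m. a * x m + b * p0 m = 0"
    unfolding proportional_def by blast
  then have "a \<noteq> 0" using ab(2)[rule_format, of 5] by (auto simp: p0_def e_def)
  show "\<forall>m. m \<noteq> 5 \<longrightarrow> x m = 0"
  proof (intro allI impI)
    fix m :: nat assume "m \<noteq> 5"
    then have "a * x m = 0" using ab(2)[rule_format, of m] by (simp add: p0_def e_def)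
    then show "x m = 0" using \<open>a \<noteq> 0\<close> by simp
  qed
next
  assume "\<forall>m. m \<noteq> 5 \<longrightarrow> x m = 0"
  then have "\<forall>m. 1 * x m + (- x 5) * p0 m = 0" by (auto simp: p0_def e_def)
  then show "proportional x p0" unfolding proportional_def by (metis one_neq_zero prod.inject)
qed

lemma not_proportional_p0:
  assumes "p 5 = 0" and "p \<noteq> (\<lambda>_. 0)"
  shows "\<not> proportional p p0"
proof
  assume "proportional p p0"
  then have "p m = 0" for m using assms(1) by (cases "m = 5") (auto simp: proportional_p0_iff)
  then show False using assms(2) by auto
qed

lemma proportional_if_supported_at:
  assumes "\<forall>m. m \<noteq> k \<longrightarrow> u m = 0" and "\<forall>m. m \<noteq> k \<longrightarrow> v m = 0"
  shows "proportional u v"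
proof (cases "u k = 0")
  case True
  then have "\<forall>m. 1 * u m + 0 * v m = 0" using assms(1) by (metis add_0 mult_1 mult_zero_left)
  then show ?thesis unfolding proportional_def by (metis one_neq_zero prod.inject)
next
  case False
  have "\<forall>m. v k * u m + (- u k) * v m = 0" using assms by (metis add.right_inverse mult.commute
    mult_minus_left mult_zero_right add_0)
  then show ?thesis using False unfolding proportional_def by (metis neg_equal_0_iff_equal prod.inject)
qed

lemma proportional_mem_span2:
  assumes "proportional x w" and "x \<noteq> (\<lambda>_. 0)" and "x \<in> span2 u v"
  shows "w \<in> span2 u v"
proof -
  obtain a b where ab: "(a, b) \<noteq> (0, 0)" "\<forall>m. a * x m + b * w m = 0"
    using assms(1) unfolding proportional_def by blast
  have "b \<noteq> 0"
  proof
    assume "b = 0"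
    then have "a \<noteq> 0" "\<forall>m. a * x m = 0" using ab by auto
    then show False using assms(2) by auto
  qed
  then have "w = (\<lambda>m. (- a / b) * x m + 0 * x m)"
    using ab(2) by (auto simp: field_simps eq_neg_iff_add_eq_0 add.commute)
  then show ?thesis using span2_lincomb[OF assms(3) assms(3)] by metis
qed

lemma evalF_cong: "(\<And>m. m < 4 \<Longrightarrow> x m = y m) \<Longrightarrow> evalF c x = evalF c y"
  unfolding evalF_def by (intro sum.cong refl) auto

lemma evalF_smult: "evalF c (\<lambda>m. b * x m) = b ^ 3 * evalF c x"
  unfolding evalF_def by (simp add: sum_distrib_left power3_eq_cube mult_ac)

lemma evalF_zero: "evalF c (\<lambda>_. 0) = 0"
  by (simp add: evalF_def)

lemma poly_restr_poly: "poly (restr_poly c p q) s = evalF c (\<lambda>m. p m + s * q m)"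
  unfolding restr_poly_def evalF_def by (simp add: poly_sum algebra_simps)

lemma order_power: "p \<noteq> 0 \<Longrightarrow> order a (p ^ n) = n * order a p"
  by (induction n) (simp_all add: order_mult)

lemma not_tangent_mult2_if_cube:
  assumes "restr_poly c p q = [:l0, l1:] ^ 3"
  shows "\<not> tangent_mult2 c p q"
proof
  assume "tangent_mult2 c p q"
  then obtain a where "[:l0, l1:] ^ 3 \<noteq> 0" and "order a ([:l0, l1:] ^ 3) = 2"
    using assms unfolding tangent_mult2_def by auto
  then have "3 * order a [:l0, l1:] = 2" by (simp add: order_power)
  then show False by presburger
qed

lemma restr_poly_eq_cube:
  assumes cube: "\<And>a b. evalF c (\<lambda>m. a * x m + b * y m) = (a * x 4 + b * y 4) ^ 3"
    and p: "\<And>m. m < 4 \<Longrightarrow> p m = a1 * x m + b1 * y m"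
    and q: "\<And>m. m < 4 \<Longrightarrow> q m = a2 * x m + b2 * y m"
  shows "restr_poly c p q = [:a1 * x 4 + b1 * y 4, a2 * x 4 + b2 * y 4:] ^ 3"
proof (rule poly_eq_poly_eq_iff[THEN iffD1], rule ext)
  fix s
  have "poly (restr_poly c p q) s = evalF c (\<lambda>m. (a1 + s * a2) * x m + (b1 + s * b2) * y m)"
    unfolding poly_restr_poly by (rule evalF_cong) (simp add: p q algebra_simps)
  also have "\<dots> = ((a1 + s * a2) * x 4 + (b1 + s * b2) * y 4) ^ 3"
    by (rule cube)
  finally show "poly (restr_poly c p q) s = poly ([:a1 * x 4 + b1 * y 4, a2 * x 4 + b2 * y 4:] ^ 3) s"
    by (simp add: algebra_simps)
qed

lemma Yeq_cone_plane: "x 0 = 0 \<Longrightarrow> x 1 * x 2 = 0 \<Longrightarrow> Yeq c t x = x 4 ^ 3 - evalF c x"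
  by (simp add: Yeq_def)

lemma Yeq_along_p0:
  assumes "q 5 = 0"
  shows "Yeq c t (\<lambda>m. s * p0 m + q m) = poly [:q 4 ^ 3 - evalF c q, quadQ q, t * q 0:] s"
proof -
  have "evalF c (\<lambda>m. s * p0 m + q m) = evalF c q"
    by (rule evalF_cong) (simp add: p0_def e_def)
  then show ?thesis using assms by (simp add: Yeq_def quadQ_def p0_def e_def algebra_simps power2_eq_square)
qed

lemma p0_nonzero: "p0 \<noteq> (\<lambda>_. 0)"
  by (metis p0_def e_def zero_neq_one)

lemma vecn_p0: "vecn 5 p0"
  by (simp add: vecn_def p0_def e_def)

lemma Fano_memE:
  assumes "L \<in> Fano c t"
  obtains u v where "vecn 5 u" "vecn 5 v" "\<not> proportional u v" "L = span2 u v"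
    "\<forall>x\<in>L. Yeq c t x = 0"
  using assms unfolding Fano_def lines5_def by blast

lemma Fano_line_through_p0_in_Gamma:
  assumes L: "L \<in> Fano c t" and "t \<noteq> 0" and "p0 \<in> L"
  shows "L \<in> Gamma c 1 \<union> Gamma c 2"
proof -
  obtain u v where uv: "vecn 5 u" "vecn 5 v" "\<not> proportional u v" "L = span2 u v"
    and Y: "\<forall>x\<in>L. Yeq c t x = 0" using Fano_memE[OF L] by blast
  obtain w where w: "w \<in> L" "\<not> proportional w p0"
    using uv(3,4) span2_generators proportional_if_supported_at[of 5 u v]
    unfolding proportional_p0_iff by blast
  define q where "q = (\<lambda>m. 1 * w m + (- w 5) * p0 m)"
  have qL: "q \<in> L"
    unfolding q_def uv(4) by (rule span2_lincomb) (use w(1) \<open>p0 \<in> L\<close> uv(4) in auto)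
  have q5: "q 5 = 0" and "\<And>m. m \<noteq> 5 \<Longrightarrow> q m = w m"
    by (simp_all add: q_def p0_def e_def)
  then have nq: "\<not> proportional q p0" using w(2) by (simp add: proportional_p0_iff)
  then have q_nonzero: "q \<noteq> (\<lambda>_. 0)" by (auto simp: proportional_p0_iff)
  have Lq: "L = span2 p0 q"
    using span2_eq_if_not_proportional[of p0 u v q] \<open>p0 \<in> L\<close> qL nq proportional_commute
    unfolding uv(4) by blast
  have "poly [:q 4 ^ 3 - evalF c q, quadQ q, t * q 0:] s = 0" for s
  proof -
    have "(\<lambda>m. s * p0 m + 1 * q m) \<in> L" unfolding Lq by (intro span2_lincomb span2_generators)
    then show ?thesis using Y Yeq_along_p0[where q = q and c = c and t = t and s = s] q5 by simp
  qed
  then have "[:q 4 ^ 3 - evalF c q, quadQ q, t * q 0:] = 0" using poly_all_0_iff_0 by blast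
  then have "q 4 ^ 3 = evalF c q" "quadQ q = 0" "q 0 = 0"
    using \<open>t \<noteq> 0\<close> by simp_all
  moreover have "q 1 * q 2 = 0" using calculation by (simp add: quadQ_def)
  moreover have "vecn 5 q" using vecn_span2 qL uv unfolding uv(4) by blast
  ultimately have "q \<in> Ccone c 1 \<or> q \<in> Ccone c 2"
    using q5 unfolding Ccone_def by auto
  then show ?thesis using Lq q_nonzero unfolding Gamma_def by blast
qed

text \<open>Two distinct points of a line L in Y that lie in the plane x0 = xi = 0 span the whole
  line, on which Y reduces to x4^3 = F.  If the projection from p0 to the coordinates
  x0..x3 is injective on L, it maps L onto the line spanned by e_j and e_3, where F then
  becomes a cube; otherwise p0 lies on L.\<close>
lemma p0_mem_Fano_line_in_cone_plane:
  assumes tangent: "tangent_mult2 c (e j) (e 3)" and ij: "{i, j} = {1::nat, 2}"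
    and L: "L \<in> Fano c t"
    and x: "x \<in> L" "x 0 = 0" "x i = 0" and y: "y \<in> L" "y 0 = 0" "y i = 0"
    and nxy: "\<not> proportional x y"
  shows "p0 \<in> L"
proof -
  obtain u v where uv: "vecn 5 u" "vecn 5 v" "L = span2 u v"
    and Y: "\<forall>x\<in>L. Yeq c t x = 0" using Fano_memE[OF L] by blast
  have comb: "(\<lambda>m. a * x m + b * y m) \<in> L" for a b
    using span2_lincomb x(1) y(1) unfolding uv(3) by blast
  have coords: "m < 4 \<Longrightarrow> m = 0 \<or> m = i \<or> m = j \<or> m = 3" for m
    using ij by (auto simp: doubleton_eq_iff)
  have cube: "evalF c (\<lambda>m. a * x m + b * y m) = (a * x 4 + b * y 4) ^ 3" for a b
  proof -
    have "(a * x 1 + b * y 1) * (a * x 2 + b * y 2) = 0"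
      using ij x y by (auto simp: doubleton_eq_iff)
    then have "Yeq c t (\<lambda>m. a * x m + b * y m) = (a * x 4 + b * y 4) ^ 3 - evalF c (\<lambda>m. a * x m + b * y m)"
      using x y by (intro Yeq_cone_plane) simp_all
    moreover have "Yeq c t (\<lambda>m. a * x m + b * y m) = 0" using Y comb by blast
    ultimately show ?thesis by simp
  qed
  define D where "D = x j * y 3 - x 3 * y j"
  show ?thesis
  proof (cases "D = 0")
    case True
    then obtain a b where ab: "(a, b) \<noteq> (0, 0)" "a * x j + b * y j = 0" "a * x 3 + b * y 3 = 0"
      unfolding D_def by (rule det2_zero_obtains_kernel)
    define z where "z = (\<lambda>m. a * x m + b * y m)"
    have z_low: "z m = 0" if "m < 4" for m
      using coords[OF that] x y ab unfolding z_def by auto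
    have "z 4 ^ 3 = evalF c (\<lambda>_. 0)"
      using cube[of a b] evalF_cong[of z "\<lambda>_. 0" c] z_low unfolding z_def by simp
    then have "z 4 = 0" by (simp add: evalF_zero)
    have "vecn 5 z" using vecn_span2 comb uv unfolding z_def uv(3) by blast
    have "z m = 0" if "m \<noteq> 5" for m
    proof -
      have "m < 4 \<or> m = 4 \<or> m > 5" using that by auto
      then show ?thesis using z_low \<open>z 4 = 0\<close> \<open>vecn 5 z\<close> unfolding vecn_def by auto
    qed
    then have "proportional z p0" by (simp add: proportional_p0_iff)
    moreover have "z \<noteq> (\<lambda>_. 0)"
      using nxy ab(1) unfolding z_def proportional_def by (metis (no_types))
    ultimately show ?thesis using proportional_mem_span2 comb unfolding z_def uv(3) by blast
  next
    case False
    have "restr_poly c (e j) (e 3) = [:(y 3 / D) * x 4 + (- x 3 / D) * y 4,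
                                        (- y j / D) * x 4 + (x j / D) * y 4:] ^ 3"
    proof (rule restr_poly_eq_cube[OF cube])
      have "x j * y 3 - x 3 * y j = D" by (simp add: D_def)
      then have "(y 3 / D) * x j + (- x 3 / D) * y j = 1" "(y 3 / D) * x 3 + (- x 3 / D) * y 3 = 0"
        "(- y j / D) * x j + (x j / D) * y j = 0" "(- y j / D) * x 3 + (x j / D) * y 3 = 1"
        using False by (simp_all add: field_simps)
      moreover have "j \<noteq> 0" "j \<noteq> 3" "i \<noteq> j" using ij by (auto simp: doubleton_eq_iff)
      moreover fix m :: nat assume "m < 4"
      ultimately show "e j m = (y 3 / D) * x m + (- x 3 / D) * y m"
        and "e 3 m = (- y j / D) * x m + (x j / D) * y m"
        using coords[of m] x y by (auto simp: e_def)
    qed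
    then show ?thesis using tangent not_tangent_mult2_if_cube by blast
  qed
qed

lemma Chat_coordinates:
  assumes "x \<in> Chat c i" and "i \<noteq> 5"
  shows "x 0 = 0" "x i = 0"
proof -
  obtain q a b where "q \<in> Ccone c i" "x = (\<lambda>m. a * q m + b * p0 m)"
    using assms(1) unfolding Chat_def span2_def by blast
  then show "x 0 = 0" "x i = 0" using assms(2) by (auto simp: Ccone_def p0_def e_def)
qed

lemma span2_p0_subset_Chat: "p \<in> Ccone c i \<Longrightarrow> span2 p0 p \<subseteq> Chat c i"
  unfolding Chat_def using span2_commute by blast

lemma p0_mem_Chat: "p0 \<in> Chat c i"
proof -
  have "(\<lambda>_. 0) \<in> Ccone c i" by (simp add: Ccone_def vecn_def evalF_zero)
  then show ?thesis using span2_p0_subset_Chat span2_generators by blast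
qed

lemma Dcirc_if_p0_notin:
  assumes "c \<in> U0" and "i \<in> {1, 2}" and LD: "L \<in> Dloc c t i" and "p0 \<notin> L"
  shows "L \<in> Dcirc c t i"
proof -
  have LF: "L \<in> Fano c t" and "\<exists>x\<in>L \<inter> Chat c i. x \<noteq> (\<lambda>_. 0)"
    using LD unfolding Dloc_def by auto
  then obtain x where x: "x \<in> L" "x \<in> Chat c i" "x \<noteq> (\<lambda>_. 0)" by blast
  obtain u v where L: "L = span2 u v" using Fano_memE[OF LF] by metis
  have "\<not> proportional x p0"
    using proportional_mem_span2 x \<open>p0 \<notin> L\<close> unfolding L by blast
  obtain j where ij: "{i, j} = {1::nat, 2}" using \<open>i \<in> {1, 2}\<close> by auto
  with \<open>c \<in> U0\<close> have tangent: "tangent_mult2 c (e j) (e 3)"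
    unfolding U0_def by (auto simp: doubleton_eq_iff)
  have "proportional y z" if "y \<in> L \<inter> Chat c i" and "z \<in> L \<inter> Chat c i" for y z
  proof (rule ccontr)
    assume "\<not> proportional y z"
    moreover have "i \<noteq> 5" using \<open>i \<in> {1, 2}\<close> by auto
    ultimately have "p0 \<in> L"
      using that Chat_coordinates[of _ c i] by (intro p0_mem_Fano_line_in_cone_plane[OF tangent ij LF]) auto
    then show False using \<open>p0 \<notin> L\<close> by blast
  qed
  then show ?thesis unfolding Dcirc_def using LD x \<open>\<not> proportional x p0\<close> by blast
qed

lemma span2_p0_mem_Fano:
  assumes "j \<in> {1, 2}" and p: "p \<in> Ccone c j" and "p \<noteq> (\<lambda>_. 0)"
  shows "span2 p0 p \<in> Fano c t"
proof -
  have pp: "vecn 5 p" "p 0 = 0" "p j = 0" "p 5 = 0" "p 4 ^ 3 = evalF c p"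
    using p unfolding Ccone_def by auto
  then have "\<not> proportional p0 p"
    using not_proportional_p0 \<open>p \<noteq> (\<lambda>_. 0)\<close> proportional_commute by blast
  moreover have "Yeq c t x = 0" if x: "x \<in> span2 p0 p" for x
  proof -
    obtain a b where xab: "x = (\<lambda>m. a * p0 m + b * p m)" using x unfolding span2_def by blast
    have "evalF c x = evalF c (\<lambda>m. b * p m)"
      by (rule evalF_cong) (simp add: xab p0_def e_def)
    also have "\<dots> = x 4 ^ 3" using pp by (simp add: evalF_smult xab p0_def e_def power_mult_distrib)
    finally show ?thesis
      using \<open>j \<in> {1, 2}\<close> pp by (subst Yeq_cone_plane) (auto simp: xab p0_def e_def)
  qed
  ultimately show ?thesis unfolding Fano_def lines5_def using vecn_p0 pp(1) by blast
qed

lemma Gamma_subset_Dloc: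
  assumes "j \<in> {1, 2}"
  shows "Gamma c j \<subseteq> Dloc c t i"
proof
  fix L assume "L \<in> Gamma c j"
  then obtain p where p: "p \<in> Ccone c j" "p \<noteq> (\<lambda>_. 0)" and L: "L = span2 p0 p"
    unfolding Gamma_def by blast
  have "L \<in> Fano c t" unfolding L using assms p by (rule span2_p0_mem_Fano)
  moreover have "p0 \<in> L \<inter> Chat c i" unfolding L using span2_generators p0_mem_Chat by blast
  ultimately show "L \<in> Dloc c t i" unfolding Dloc_def using p0_nonzero by blast
qed

lemma span2_p0_notin_Dcirc_if_in_Ccone:
  assumes p: "p \<in> Ccone c i" and "p \<noteq> (\<lambda>_. 0)"
  shows "span2 p0 p \<notin> Dcirc c t i"
proof
  assume L: "span2 p0 p \<in> Dcirc c t i"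
  define y where "y = (\<lambda>m. 1 * p0 m + 1 * p m)"
  have "p \<in> span2 p0 p" "y \<in> span2 p0 p"
    unfolding y_def by (intro span2_generators span2_lincomb)+
  then have "p \<in> Chat c i" "y \<in> Chat c i" using span2_p0_subset_Chat[OF p] by auto
  have "p 5 = 0" using p by (simp add: Ccone_def)
  then have y5: "y 5 = 1" and y_off5: "\<And>m. m \<noteq> 5 \<Longrightarrow> y m = p m"
    by (simp_all add: y_def p0_def e_def)
  have "\<not> proportional p p0" using \<open>p 5 = 0\<close> \<open>p \<noteq> (\<lambda>_. 0)\<close> by (rule not_proportional_p0)
  moreover have "\<not> proportional y p0" using calculation y_off5 by (simp add: proportional_p0_iff)
  moreover have "y \<noteq> (\<lambda>_. 0)" using y5 by auto
  moreover have "\<forall>x\<in>span2 p0 p \<inter> Chat c i. \<forall>y\<in>span2 p0 p \<inter> Chat c i.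
      x \<noteq> (\<lambda>_. 0) \<and> \<not> proportional x p0 \<and> y \<noteq> (\<lambda>_. 0) \<and> \<not> proportional y p0 \<longrightarrow> proportional x y"
    using L unfolding Dcirc_def by blast
  ultimately have "proportional p y"
    using \<open>p \<noteq> (\<lambda>_. 0)\<close> \<open>p \<in> span2 p0 p\<close> \<open>y \<in> span2 p0 p\<close> \<open>p \<in> Chat c i\<close> \<open>y \<in> Chat c i\<close>
    by blast
  then obtain a b where ab: "(a, b) \<noteq> (0, 0)" "\<forall>m. a * p m + b * y m = 0"
    unfolding proportional_def by blast
  then have "b = 0" using ab(2)[rule_format, of 5] y5 \<open>p 5 = 0\<close> by simp
  then show False using ab \<open>p \<noteq> (\<lambda>_. 0)\<close> by auto
qed

lemma span2_p0_notin_Dcirc_if_coordinate_nonzero: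
  assumes "p i \<noteq> 0" and "i \<noteq> 5"
  shows "span2 p0 p \<notin> Dcirc c t i"
proof
  assume "span2 p0 p \<in> Dcirc c t i"
  then obtain x where x: "x \<in> span2 p0 p" "x \<in> Chat c i" "\<not> proportional x p0"
    unfolding Dcirc_def by blast
  obtain a b where xab: "x = (\<lambda>m. a * p0 m + b * p m)" using x(1) unfolding span2_def by blast
  have "b * p i = 0" using Chat_coordinates[OF x(2) \<open>i \<noteq> 5\<close>] \<open>i \<noteq> 5\<close> by (simp add: xab p0_def e_def)
  then have "b = 0" using \<open>p i \<noteq> 0\<close> by simp
  then have "proportional x p0" unfolding proportional_p0_iff by (simp add: xab p0_def e_def)
  then show False using x(3) by blast
qed

lemma Gamma_disjoint_Dcirc:
  assumes "i \<in> {1, 2}"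
  shows "Gamma c j \<inter> Dcirc c t i = {}"
proof -
  have "span2 p0 p \<notin> Dcirc c t i" if p: "p \<in> Ccone c j" "p \<noteq> (\<lambda>_. 0)" for p
  proof (cases "p i = 0")
    case True
    then have "p \<in> Ccone c i" using p(1) by (simp add: Ccone_def)
    then show ?thesis using p(2) by (rule span2_p0_notin_Dcirc_if_in_Ccone)
  next
    case False
    then show ?thesis using assms by (intro span2_p0_notin_Dcirc_if_coordinate_nonzero) auto
  qed
  then show ?thesis unfolding Gamma_def by blast
qed

theorem lemma5p8:
  fixes c :: cubic and t :: complex and i :: nat
  assumes "c \<in> U0" and "t \<noteq> 0" and "i \<in> {1, 2}"
  shows "Dloc c t i - Dcirc c t i = Gamma c 1 \<union> Gamma c 2"
proof (intro equalityI subsetI)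
  fix L assume L: "L \<in> Dloc c t i - Dcirc c t i"
  then have "p0 \<in> L" using Dcirc_if_p0_notin[OF assms(1,3)] by blast
  moreover have "L \<in> Fano c t" using L unfolding Dloc_def by blast
  ultimately show "L \<in> Gamma c 1 \<union> Gamma c 2"
    using Fano_line_through_p0_in_Gamma \<open>t \<noteq> 0\<close> by blast
next
  fix L assume "L \<in> Gamma c 1 \<union> Gamma c 2"
  then show "L \<in> Dloc c t i - Dcirc c t i"
    using Gamma_subset_Dloc Gamma_disjoint_Dcirc[OF assms(3)] by blast
qed

end
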